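(* For $|q|<1$ ($q\neq0$) and every $m\in\mathbb Z$, $$\mathbf J_m(q)^{-1}=\begin{pmatrix}1 & L^{(0)}_m(q) & -L^{(1)}_m(q)\\ 0 & -G^{(0)}_{m+1}(q) & G^{(1)}_{m+1}(q)\\ 0 & G^{(0)}_m(q) & -G^{(1)}_m(q)\end{pmatrix},$$ where $L^{(0)}_m=G^{(0)}_{m+1}G^{(2)}_m-G^{(0)}_mG^{(2)}_{m+1}$ and $L^{(1)}_m=G^{(1)}_{m+1}G^{(2)}_m-G^{(1)}_mG^{(2)}_{m+1}$ (all evaluated at $q$). Moreover $$L^{(0)}_m(q)=2E^{(0)}_1(q)-1-m+\sum_{n\ge1}(-1)^n\frac{q^{n(n+1)/2}}{(q;q)_n^2}\frac{q^{mn+n}}{1-q^n},$$ $$L^{(1)}_m(q)=-\tfrac38-2E^{(0)}_1(q)^2+2E^{(0)}_1(q)-E^{(0)}_2(q)-\tfrac1{24}E_2(q)+2mE^{(0)}_1(q)-m-\tfrac{m^2}2+\sum_{n\ge1}(-1)^n\frac{q^{n(n+1)/2}}{(q;q)_n^2}\frac{q^{mn+n}}{1-q^n}\Big(n+m+\tfrac12-2E^{(n)}_1(q)+\frac1{1-q^n}\Big).$$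
   Context: Notation: $(a;q)_n=\prod_{j=0}^{n-1}(1-aq^j)$. For $|q|<1$, $E_k^{(n)}(q)=\sum_{s\ge1}s^{k-1}\frac{q^{s(n+1)}}{1-q^s}$, $E_2(q)=1-24E_2^{(0)}(q)$, and $G^{(0)}_m(q)=\sum_{n\ge0}(-1)^n\frac{q^{n(n+1)/2+mn}}{(q;q)_n^2}$, $G^{(1)}_m(q)=\sum_{n\ge0}\big(n+m+\tfrac12-2E_1^{(n)}(q)\big)(-1)^n\frac{q^{n(n+1)/2+mn}}{(q;q)_n^2}$, $G^{(2)}_m(q)=\sum_{n\ge0}\Big(\tfrac12\big(n+m+\tfrac12-2E_1^{(n)}(q)\big)^2-E_2^{(n)}(q)-\tfrac1{24}E_2(q)\Big)(-1)^n\frac{q^{n(n+1)/2+mn}}{(q;q)_n^2}$. $\mathbf J_m(q)$ is the $3\times3$ matrix with rows $(1,G^{(2)}_m,G^{(2)}_{m+1})$, $(0,G^{(1)}_m,G^{(1)}_{m+1})$, $(0,G^{(0)}_m,G^{(0)}_{m+1})$. *)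

theory Defs
  imports "HOL-Analysis.Analysis"
begin

definition qpoch :: "complex \<Rightarrow> complex \<Rightarrow> nat \<Rightarrow> complex" where
  "qpoch a q n = (\<Prod>j<n. 1 - a * q ^ j)"

definition Ekn :: "nat \<Rightarrow> nat \<Rightarrow> complex \<Rightarrow> complex" where
  "Ekn k n q = (\<Sum>s. of_nat (Suc s) ^ (k - 1) * q ^ (Suc s * (n + 1)) / (1 - q ^ Suc s))"

definition E2 :: "complex \<Rightarrow> complex" where
  "E2 q = 1 - 24 * Ekn 2 0 q"

definition Gterm :: "int \<Rightarrow> complex \<Rightarrow> nat \<Rightarrow> complex" where
  "Gterm m q n = (-1) ^ n * q ^ (n * (n + 1) div 2) * q powi (m * int n) / (qpoch q q n) ^ 2"

definition A1 :: "int \<Rightarrow> complex \<Rightarrow> nat \<Rightarrow> complex" where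
  "A1 m q n = of_nat n + of_int m + 1 / 2 - 2 * Ekn 1 n q"

definition G0 :: "int \<Rightarrow> complex \<Rightarrow> complex" where
  "G0 m q = (\<Sum>n. Gterm m q n)"

definition G1 :: "int \<Rightarrow> complex \<Rightarrow> complex" where
  "G1 m q = (\<Sum>n. A1 m q n * Gterm m q n)"

definition G2 :: "int \<Rightarrow> complex \<Rightarrow> complex" where
  "G2 m q = (\<Sum>n. ((1 / 2) * (A1 m q n) ^ 2 - Ekn 2 n q - (1 / 24) * E2 q) * Gterm m q n)"

definition Jmat :: "int \<Rightarrow> complex \<Rightarrow> complex ^ 3 ^ 3" where
  "Jmat m q = vector [vector [1, G2 m q, G2 (m + 1) q],
                      vector [0, G1 m q, G1 (m + 1) q],
                      vector [0, G0 m q, G0 (m + 1) q]]"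

definition L0 :: "int \<Rightarrow> complex \<Rightarrow> complex" where
  "L0 m q = G0 (m + 1) q * G2 m q - G0 m q * G2 (m + 1) q"

definition L1 :: "int \<Rightarrow> complex \<Rightarrow> complex" where
  "L1 m q = G1 (m + 1) q * G2 m q - G1 m q * G2 (m + 1) q"

end

theory Submission
  imports Defs
begin

text \<open>
  Let \<open>Gterm m n\<close> be the \<open>n\<close>-th summand of \<open>G0 m\<close>. Then \<open>G1 m\<close> and \<open>G2 m\<close> are sums
  \<open>\<Sum>n. w n * Gterm m n\<close> whose weights are polynomials in \<open>m\<close> with coefficients independent
  of \<open>m\<close>. Since \<open>Gterm m (n + 1) * (1 - q^(n+1))^2 = - q^(m+n+1) * Gterm m n\<close>, summation by
  parts gives the recurrences \<open>G (m + 2) = (2 - q^(m+1)) * G (m + 1) - G m + c\<close> with \<open>c = 0\<close>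
  for \<open>G0\<close>, \<open>G1\<close> and \<open>c = 1\<close> for \<open>G2\<close>. Consequently the Casoratian of \<open>G0\<close> and \<open>G1\<close>,
  which is \<open>det J_m\<close>, does not depend on \<open>m\<close>, while \<open>L0\<close> and \<open>L1\<close> (the Casoratians of
  \<open>G0, G2\<close> and \<open>G1, G2\<close>) change by \<open>- G0 (m + 1)\<close> and \<open>- G1 (m + 1)\<close>, just like the claimed
  closed forms. As \<open>m \<rightarrow> \<infinity>\<close>, \<open>Gterm m n \<rightarrow> [n = 0]\<close>, so every sum with an
  \<open>m\<close>-independent weight of polynomial growth tends to its weight at \<open>0\<close>; this fixes the
  constants: \<open>det J_m = -1\<close>, which gives the inverse by Cramer's rule, and the closed forms hold.
\<close>

definition casoratian :: "(int \<Rightarrow> 'a::comm_ring) \<Rightarrow> (int \<Rightarrow> 'a) \<Rightarrow> int \<Rightarrow> 'a" where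
  "casoratian f g m = f (m + 1) * g m - f m * g (m + 1)"

lemma casoratian_step:
  assumes "f (m + 2) = c * f (m + 1) - f m"
      and "g (m + 2) = c * g (m + 1) - g m + a"
  shows "casoratian f g (m + 1) = casoratian f g m - a * f (m + 1)"
proof -
  have "m + 1 + 1 = m + 2" by simp
  then show ?thesis unfolding casoratian_def by (simp only: assms) (simp add: algebra_simps)
qed

lemma shift_invariant_eq_limit:
  fixes D :: "int \<Rightarrow> 'a::t2_space"
  assumes step: "\<And>m. D (m + 1) = D m" and lim: "(\<lambda>k. D (int k)) \<longlonglongrightarrow> c"
  shows "D m = c"
proof -
  have const: "D m = D 0" for m
  proof (induction m rule: int_induct[where k = 0])
    case (step1 i) then show ?case using step[of i] by simp
  next
    case (step2 i) then show ?case using step[of "i - 1"] by simp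
  qed simp
  have "(\<lambda>k. D (int k)) = (\<lambda>k. D 0)" using const by blast
  with lim have "(\<lambda>k. D 0) \<longlonglongrightarrow> c" by simp
  then show ?thesis using const[of m] by (simp add: LIMSEQ_const_iff)
qed

lemma matrix_inv_eqI:
  fixes A B :: "'a::semiring_1 ^ 'n ^ 'n"
  assumes AB: "A ** B = mat 1" and BA: "B ** A = mat 1"
  shows "invertible A \<and> matrix_inv A = B"
proof
  show inv: "invertible A" unfolding invertible_def using AB BA by blast
  let ?A' = "matrix_inv A"
  have "A ** ?A' = mat 1 \<and> ?A' ** A = mat 1"
    unfolding matrix_inv_def by (rule someI[of _ B]) (use AB BA in blast)
  then have "?A' = ?A' ** (A ** B)" "?A' ** A = mat 1" using AB by simp_all
  then show "?A' = B" by (simp add: matrix_mul_assoc)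
qed

lemma matrix_inv_block_upper_3:
  fixes b b' c c' e e' d :: "'a::field"
  defines "A \<equiv> vector [vector [1, e, e'], vector [0, c, c'], vector [0, b, b']] :: 'a ^ 3 ^ 3"
  assumes det: "c * b' - c' * b = d" and "d \<noteq> 0"
  shows "invertible A \<and> matrix_inv A =
       vector [vector [1, (b * e' - b' * e) / d, (c' * e - c * e') / d],
               vector [0, b' / d, - c' / d],
               vector [0, - b / d, c / d]]"
  unfolding A_def using \<open>d \<noteq> 0\<close>
  by (intro matrix_inv_eqI; simp add: vec_eq_iff forall_3 matrix_matrix_mult_def sum_3 mat_def;
      simp add: field_simps; insert det; algebra)

definition quadratic_growth :: "(nat \<Rightarrow> 'a::real_normed_field) \<Rightarrow> bool" where
  "quadratic_growth w \<longleftrightarrow> (\<exists>C. \<forall>n. norm (w n) \<le> C * (real n + 1) ^ 2)"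

lemma quadratic_growthI: "(\<And>n. norm (w n) \<le> C * (real n + 1) ^ 2) \<Longrightarrow> quadratic_growth w"
  unfolding quadratic_growth_def by blast

lemma quadratic_growthE:
  assumes "quadratic_growth w"
  obtains C where "C \<ge> 0" "\<And>n. norm (w n) \<le> C * (real n + 1) ^ 2"
proof -
  obtain C where C: "\<And>n. norm (w n) \<le> C * (real n + 1) ^ 2"
    using assms unfolding quadratic_growth_def by blast
  have "C \<ge> 0" using order_trans[OF norm_ge_zero C[of 0]] by simp
  then show ?thesis using C that by blast
qed

lemma quadratic_growth_linear:
  assumes "\<And>n. norm (w n) \<le> A * (real n + 1)"
  shows "quadratic_growth w"
proof (rule quadratic_growthI)
  fix n
  have "A \<ge> 0" using order_trans[OF norm_ge_zero assms[of 0]] by simp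
  moreover have "real n + 1 \<le> (real n + 1) ^ 2" by (simp add: power2_eq_square)
  ultimately have "A * (real n + 1) \<le> A * (real n + 1) ^ 2" by (rule mult_left_mono[rotated])
  then show "norm (w n) \<le> A * (real n + 1) ^ 2" using assms[of n] by linarith
qed

lemma quadratic_growth_bounded:
  assumes "\<And>n. norm (w n) \<le> B"
  shows "quadratic_growth w"
proof (rule quadratic_growth_linear)
  fix n
  have "B \<ge> 0" using order_trans[OF norm_ge_zero assms[of 0]] .
  then have "B \<le> B * (real n + 1)" using mult_left_mono[of 1 "real n + 1" B] by simp
  then show "norm (w n) \<le> B * (real n + 1)" using assms[of n] by linarith
qed

lemma quadratic_growth_const [simp]: "quadratic_growth (\<lambda>_. c)"
  by (rule quadratic_growth_bounded[of _ "norm c"]) simp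

lemma quadratic_growth_delta_0 [simp]: "quadratic_growth (\<lambda>n. if n = 0 then c else 0)"
  by (rule quadratic_growth_bounded[of _ "norm c"]) simp

lemma quadratic_growth_add [simp]:
  assumes "quadratic_growth a" "quadratic_growth b"
  shows "quadratic_growth (\<lambda>n. a n + b n)"
proof -
  obtain A B where "\<And>n. norm (a n) \<le> A * (real n + 1) ^ 2" "\<And>n. norm (b n) \<le> B * (real n + 1) ^ 2"
    using assms by (metis quadratic_growthE)
  then show ?thesis
    by (intro quadratic_growthI[of _ "A + B"]) (smt (verit) distrib_right norm_triangle_ineq)
qed

lemma quadratic_growth_mult_bounded:
  assumes "quadratic_growth a" "\<And>n. norm (b n) \<le> B"
  shows "quadratic_growth (\<lambda>n. a n * b n)"
proof -
  obtain A where "A \<ge> 0" "\<And>n. norm (a n) \<le> A * (real n + 1) ^ 2"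
    using quadratic_growthE[OF assms(1)] by blast
  then have "norm (a n * b n) \<le> (A * B) * (real n + 1) ^ 2" for n
    unfolding norm_mult using assms(2)[of n]
    by (smt (verit, best) mult.commute mult.left_commute mult_mono norm_ge_zero)
  then show ?thesis by (rule quadratic_growthI)
qed

lemma quadratic_growth_cmult [simp]: "quadratic_growth a \<Longrightarrow> quadratic_growth (\<lambda>n. c * a n)"
  using quadratic_growth_mult_bounded[of a "\<lambda>_. c" "norm c"] by (simp add: mult.commute)

lemma quadratic_growth_divide [simp]: "quadratic_growth a \<Longrightarrow> quadratic_growth (\<lambda>n. a n / c)"
  using quadratic_growth_cmult[of a "inverse c"] by (simp add: field_simps)

lemma quadratic_growth_diff [simp]:
  "quadratic_growth a \<Longrightarrow> quadratic_growth b \<Longrightarrow> quadratic_growth (\<lambda>n. a n - b n)"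
  using quadratic_growth_add[OF _ quadratic_growth_cmult[of b "- 1"]] by simp

lemma quadratic_growth_power2:
  assumes "\<And>n. norm (w n) \<le> A * (real n + 1)"
  shows "quadratic_growth (\<lambda>n. w n ^ 2)"
proof (rule quadratic_growthI)
  fix n
  have "norm (w n ^ 2) = norm (w n) ^ 2" by (simp add: norm_power)
  also have "\<dots> \<le> (A * (real n + 1)) ^ 2" by (rule power_mono[OF assms norm_ge_zero])
  finally show "norm (w n ^ 2) \<le> A ^ 2 * (real n + 1) ^ 2" by (simp add: power_mult_distrib)
qed

subsection \<open>Sums weighted by the summands of \<open>G0\<close>\<close>

locale punctured_unit_disc =
  fixes q :: complex
  assumes norm_q_less_1: "norm q < 1" and q_nonzero: "q \<noteq> 0"
begin

lemma norm_qpow_le_1: "norm (q ^ n) \<le> 1"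
  using norm_q_less_1 by (simp add: norm_power power_le_one)

lemma one_minus_norm_q_le: "1 - norm q \<le> norm (1 - q ^ Suc n)"
proof -
  have "norm (q ^ Suc n) \<le> norm q"
    unfolding norm_power using norm_q_less_1 by (simp add: power_le_one mult_left_le)
  then show ?thesis using norm_triangle_ineq2[of 1 "q ^ Suc n"] by simp
qed

lemma norm_qpow_Suc_less_1: "norm (q ^ Suc n) < 1"
  using power_Suc_less_one[of "norm q" n] norm_q_less_1 q_nonzero by (simp add: norm_mult norm_power)

lemma norm_one_minus_qpow_le_2: "norm (1 - q ^ n) \<le> 2"
  using norm_triangle_ineq4[of 1 "q ^ n"] norm_qpow_le_1[of n] by simp

lemma one_minus_qpow_nonzero: "n > 0 \<Longrightarrow> 1 - q ^ n \<noteq> 0"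
  using one_minus_norm_q_le[of "n - 1"] norm_q_less_1 by auto

lemma norm_inverse_one_minus_qpow_le: "norm (1 / (1 - q ^ n)) \<le> 1 / (1 - norm q)"
proof (cases n)
  case (Suc k)
  then show ?thesis
    using one_minus_norm_q_le[of k] norm_q_less_1 by (simp add: norm_divide frac_le)
qed (use norm_q_less_1 in simp)

lemma qpoch_nonzero: "qpoch q q n \<noteq> 0"
  unfolding qpoch_def using one_minus_qpow_nonzero[of "Suc _"] by (simp add: mult.commute)

lemma Gterm_0 [simp]: "Gterm m q 0 = 1"
  by (simp add: Gterm_def qpoch_def)

lemma Gterm_Suc: "Gterm m q (Suc n) * (1 - q ^ Suc n) ^ 2 = - (q powi (m + 1) * q ^ n * Gterm m q n)"
proof -
  have tri: "Suc n * (Suc n + 1) div 2 = n * (n + 1) div 2 + Suc n"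
    by (induction n) auto
  have powi: "q powi (m * int (Suc n)) = q powi (m * int n) * q powi m"
    by (simp add: algebra_simps power_int_add q_nonzero)
  have qpoch: "qpoch q q (Suc n) = qpoch q q n * (1 - q ^ Suc n)"
    by (simp add: qpoch_def)
  have "q powi (m + 1) = q powi m * q" by (simp add: power_int_add q_nonzero)
  then show ?thesis
    using qpoch_nonzero[of n] one_minus_qpow_nonzero[of "Suc n"]
    unfolding Gterm_def tri powi qpoch power_mult_distrib by (simp add: field_simps power_add)
qed

lemma Gterm_shift: "Gterm (m + int j) q n = q ^ (j * n) * Gterm m q n"
proof -
  have "q powi ((m + int j) * int n) = q powi (m * int n) * q ^ (j * n)"
    by (simp add: algebra_simps power_int_add q_nonzero flip: of_nat_mult)
  then show ?thesis unfolding Gterm_def by simp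
qed

lemma norm_Gterm_Suc_le:
  "norm (Gterm m q (Suc n)) \<le> norm (q powi (m + 1)) / (1 - norm q) ^ 2 * norm q ^ n * norm (Gterm m q n)"
proof -
  have "(1 - norm q) ^ 2 \<le> norm (1 - q ^ Suc n) ^ 2"
    using one_minus_norm_q_le[of n] norm_q_less_1 by (simp add: power_mono)
  then have "norm (Gterm m q (Suc n)) * (1 - norm q) ^ 2 \<le> norm (Gterm m q (Suc n) * (1 - q ^ Suc n) ^ 2)"
    by (simp add: norm_mult norm_power mult_left_mono)
  also have "\<dots> = norm (q powi (m + 1)) * norm q ^ n * norm (Gterm m q n)"
    unfolding Gterm_Suc by (simp add: norm_mult norm_power)
  finally show ?thesis
    using norm_q_less_1 by (simp add: field_simps)
qed

lemma summable_Gterm_weighted: "summable (\<lambda>n. (real n + 1) ^ 2 * norm (Gterm m q n))"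
proof -
  define K where "K = 4 * norm (q powi (m + 1)) / (1 - norm q) ^ 2"
  have "(\<lambda>n. K * norm q ^ n) \<longlonglongrightarrow> 0"
    by (intro tendsto_mult_right_zero LIMSEQ_realpow_zero) (use norm_q_less_1 in auto)
  then have "eventually (\<lambda>n. K * norm q ^ n < 1 / 2) sequentially"
    by (rule order_tendstoD) simp
  then obtain N where N: "\<And>n. n \<ge> N \<Longrightarrow> K * norm q ^ n < 1 / 2"
    by (auto simp: eventually_sequentially)
  show ?thesis
  proof (rule summable_ratio_test[where c = "1 / 2" and N = N])
    fix n assume "n \<ge> N"
    have "(real (Suc n) + 1) ^ 2 \<le> 4 * (real n + 1) ^ 2"
      by (simp add: power2_eq_square algebra_simps)
    then have "(real (Suc n) + 1) ^ 2 * norm (Gterm m q (Suc n))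
        \<le> (4 * (real n + 1) ^ 2) * (norm (q powi (m + 1)) / (1 - norm q) ^ 2 * norm q ^ n * norm (Gterm m q n))"
      by (intro mult_mono norm_Gterm_Suc_le) auto
    also have "\<dots> = (K * norm q ^ n) * ((real n + 1) ^ 2 * norm (Gterm m q n))"
      by (simp add: K_def)
    also have "\<dots> \<le> 1 / 2 * ((real n + 1) ^ 2 * norm (Gterm m q n))"
      using N[OF \<open>n \<ge> N\<close>] by (intro mult_right_mono) auto
    finally show "norm ((real (Suc n) + 1) ^ 2 * norm (Gterm m q (Suc n)))
        \<le> 1 / 2 * norm ((real n + 1) ^ 2 * norm (Gterm m q n))" by simp
  qed simp
qed

definition Gsum :: "(nat \<Rightarrow> complex) \<Rightarrow> int \<Rightarrow> complex" where
  "Gsum w m = (\<Sum>n. w n * Gterm m q n)"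

lemma summable_norm_Gsum:
  assumes "quadratic_growth w"
  shows "summable (\<lambda>n. norm (w n * Gterm m q n))"
proof -
  obtain C where "C \<ge> 0" and C: "\<And>n. norm (w n) \<le> C * (real n + 1) ^ 2"
    using quadratic_growthE[OF assms] by blast
  show ?thesis
  proof (rule summable_comparison_test'[where N = 0])
    show "summable (\<lambda>n. C * ((real n + 1) ^ 2 * norm (Gterm m q n)))"
      by (intro summable_mult summable_Gterm_weighted)
    show "norm (norm (w n * Gterm m q n)) \<le> C * ((real n + 1) ^ 2 * norm (Gterm m q n))" for n
      using mult_right_mono[OF C[of n] norm_ge_zero] by (simp add: norm_mult mult.assoc)
  qed
qed

lemma sums_Gsum: "quadratic_growth w \<Longrightarrow> (\<lambda>n. w n * Gterm m q n) sums Gsum w m"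
  unfolding Gsum_def by (rule summable_sums[OF summable_norm_cancel[OF summable_norm_Gsum]])

lemma Gsum_add:
  "quadratic_growth a \<Longrightarrow> quadratic_growth b \<Longrightarrow> Gsum (\<lambda>n. a n + b n) m = Gsum a m + Gsum b m"
  using sums_unique[OF sums_add[OF sums_Gsum sums_Gsum]] by (simp add: Gsum_def distrib_right)

lemma Gsum_diff:
  "quadratic_growth a \<Longrightarrow> quadratic_growth b \<Longrightarrow> Gsum (\<lambda>n. a n - b n) m = Gsum a m - Gsum b m"
  using sums_unique[OF sums_diff[OF sums_Gsum sums_Gsum]] by (simp add: Gsum_def left_diff_distrib)

lemma Gsum_cmult: "quadratic_growth a \<Longrightarrow> Gsum (\<lambda>n. c * a n) m = c * Gsum a m"
  using sums_unique[OF sums_mult[OF sums_Gsum[of a m], where c = c]] by (simp add: Gsum_def mult.assoc)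

lemma Gsum_divide: "quadratic_growth a \<Longrightarrow> Gsum (\<lambda>n. a n / c) m = Gsum a m / c"
  using Gsum_cmult[of a "inverse c" m] by (simp add: field_simps)

lemma Gsum_delta_0: "Gsum (\<lambda>n. if n = 0 then c else 0) m = c"
proof -
  have "(\<lambda>n. (if n = 0 then c else 0) * Gterm m q n) = (\<lambda>n. if n = 0 then c else 0)"
    by auto
  then show ?thesis using sums_unique[OF sums_single[of 0 "\<lambda>_. c"]] by (simp add: Gsum_def)
qed

lemma Gsum_shift: "Gsum w (m + int j) = Gsum (\<lambda>n. w n * q ^ (j * n)) m"
  unfolding Gsum_def Gterm_shift by (simp add: mult_ac)

lemma quadratic_growth_mult_qpow [simp]:
  "quadratic_growth w \<Longrightarrow> quadratic_growth (\<lambda>n. w n * q ^ f n)"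
  by (rule quadratic_growth_mult_bounded[of _ _ 1]) (simp_all add: norm_qpow_le_1)

lemma quadratic_growth_qpow [simp]: "quadratic_growth (\<lambda>n. q ^ f n)"
  using quadratic_growth_mult_qpow[of "\<lambda>_. 1" f] by simp

lemma Gsum_shift_1: "Gsum w (m + 1) = Gsum (\<lambda>n. w n * q ^ n) m"
  using Gsum_shift[of w m 1] by simp

lemma Gsum_shift_2: "Gsum w (m + 2) = Gsum (\<lambda>n. w n * q ^ (2 * n)) m"
  using Gsum_shift[of w m 2] by simp

text \<open>Summation by parts against the recurrence of \<open>Gterm\<close>; no case split at \<open>n = 0\<close> is
  needed on the right, since there \<open>(1 - q ^ n)\<^sup>2 = 0\<close> absorbs the junk value \<open>w (0 - 1)\<close>.\<close>
lemma Gsum_recurrence: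
  assumes w: "quadratic_growth w"
  shows "Gsum w (m + 2) = (2 - q powi (m + 1)) * Gsum w (m + 1) - Gsum w m
       + Gsum (\<lambda>n. (w n - w (n - 1)) * (1 - q ^ n) ^ 2) m"
proof -
  define c where "c = q powi (m + 1)"
  define h where "h n = w (n - 1) * (1 - q ^ n) ^ 2 * Gterm m q n" for n
  have w1: "quadratic_growth (\<lambda>n. w n * q ^ n)"
    using quadratic_growth_mult_qpow[OF w] .
  have "norm ((1 - q ^ n) ^ 2) \<le> 4" for n
    using power_mono[OF norm_one_minus_qpow_le_2[of n] norm_ge_zero, of 2] by (simp add: norm_power)
  then have w2: "quadratic_growth (\<lambda>n. w n * (1 - q ^ n) ^ 2)"
    by (rule quadratic_growth_mult_bounded[OF w])
  have "h (Suc n) = - c * (w n * q ^ n * Gterm m q n)" for n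
    unfolding h_def c_def using Gterm_Suc[of m n] by (simp add: mult_ac)
  then have "(\<lambda>n. h (Suc n)) sums (- c * Gsum (\<lambda>n. w n * q ^ n) m)"
    using sums_mult[OF sums_Gsum[OF w1], of "- c"] by simp
  moreover have "h 0 = 0" by (simp add: h_def)
  ultimately have "h sums (- c * Gsum (\<lambda>n. w n * q ^ n) m)"
    using sums_Suc_iff[of h] by simp
  from sums_diff[OF sums_Gsum[OF w2] this]
  have "Gsum (\<lambda>n. (w n - w (n - 1)) * (1 - q ^ n) ^ 2) m
      = Gsum (\<lambda>n. w n * (1 - q ^ n) ^ 2) m + c * Gsum (\<lambda>n. w n * q ^ n) m"
    unfolding Gsum_def h_def by (simp add: sums_iff algebra_simps)
  moreover have "Gsum (\<lambda>n. w n * (1 - q ^ n) ^ 2) m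
      = Gsum (\<lambda>n. w n * q ^ (2 * n)) m - 2 * Gsum (\<lambda>n. w n * q ^ n) m + Gsum w m"
  proof -
    have "(\<lambda>n. w n * (1 - q ^ n) ^ 2) = (\<lambda>n. w n * q ^ (2 * n) - 2 * (w n * q ^ n) + w n)"
      by (simp add: power2_eq_square power_mult algebra_simps)
    then show ?thesis using w w1 by (simp add: Gsum_add Gsum_diff Gsum_cmult)
  qed
  ultimately show ?thesis unfolding Gsum_shift_1 Gsum_shift_2 c_def by (simp add: algebra_simps)
qed

lemma Gsum_tendsto:
  assumes w: "quadratic_growth w"
  shows "(\<lambda>k. Gsum w (int k)) \<longlonglongrightarrow> w 0"
proof -
  define M where "M = (\<Sum>n. norm (w (Suc n) * Gterm 0 q (Suc n)))"
  have M: "summable (\<lambda>n. norm (w (Suc n) * Gterm 0 q (Suc n)))"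
    using summable_norm_Gsum[OF w, of 0] by (subst summable_Suc_iff)
  have bound: "norm (Gsum w (int k) - w 0) \<le> norm q ^ k * M" for k
  proof -
    have "Gsum w (int k) - w 0 = (\<Sum>n. w (Suc n) * Gterm (int k) q (Suc n))"
      using suminf_split_head[OF sums_summable[OF sums_Gsum[OF w]]] by (simp add: Gsum_def)
    also have "norm \<dots> \<le> (\<Sum>n. norm q ^ k * norm (w (Suc n) * Gterm 0 q (Suc n)))"
    proof (rule norm_suminf_le)
      fix n
      have "norm q ^ (k * Suc n) \<le> norm q ^ k"
        by (rule power_decreasing) (use norm_q_less_1 in auto)
      moreover have "norm (w (Suc n) * Gterm (int k) q (Suc n))
          = norm q ^ (k * Suc n) * norm (w (Suc n) * Gterm 0 q (Suc n))"
        using Gterm_shift[of 0 k "Suc n"] by (simp add: norm_mult norm_power mult_ac)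
      ultimately show "norm (w (Suc n) * Gterm (int k) q (Suc n))
          \<le> norm q ^ k * norm (w (Suc n) * Gterm 0 q (Suc n))"
        by (simp add: mult_right_mono)
    qed (rule summable_mult[OF M])
    also have "\<dots> = norm q ^ k * M" unfolding M_def by (rule suminf_mult[OF M])
    finally show ?thesis .
  qed
  have "(\<lambda>k. norm q ^ k * M) \<longlonglongrightarrow> 0"
    by (intro tendsto_mult_left_zero LIMSEQ_realpow_zero) (use norm_q_less_1 in auto)
  then have "(\<lambda>k. Gsum w (int k) - w 0) \<longlonglongrightarrow> 0"
    by (rule Lim_null_comparison[rotated]) (simp add: bound)
  then show ?thesis by (rule LIM_zero_cancel)
qed

lemma Gsum_tendsto_Suc:
  "quadratic_growth w \<Longrightarrow> (\<lambda>k. Gsum w (int k + 1)) \<longlonglongrightarrow> w 0"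
  using LIMSEQ_Suc[OF Gsum_tendsto] by (simp add: add.commute)

lemma norm_Ekn_term_le:
  assumes "k \<le> 2"
  shows "norm (of_nat (Suc s) ^ (k - 1) * q ^ (Suc s * (n + 1)) / (1 - q ^ Suc s))
         \<le> real (Suc s) * norm q ^ Suc s / (1 - norm q)"
proof -
  have "k - 1 = 0 \<or> k - 1 = 1" using assms by arith
  then have "real (Suc s) ^ (k - 1) \<le> real (Suc s)" by auto
  moreover have "norm q ^ (Suc s * (n + 1)) \<le> norm q ^ Suc s"
    by (rule power_decreasing) (use norm_q_less_1 in auto)
  ultimately have "real (Suc s) ^ (k - 1) * norm q ^ (Suc s * (n + 1)) \<le> real (Suc s) * norm q ^ Suc s"
    by (intro mult_mono) auto
  then have "real (Suc s) ^ (k - 1) * norm q ^ (Suc s * (n + 1)) / norm (1 - q ^ Suc s)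
      \<le> real (Suc s) * norm q ^ Suc s / (1 - norm q)"
    using one_minus_norm_q_le[of s] norm_q_less_1 by (intro frac_le) auto
  then show ?thesis by (simp only: norm_mult norm_divide norm_power norm_of_nat)
qed

lemma sums_Ekn_bound:
  "(\<lambda>s. real (Suc s) * norm q ^ Suc s / (1 - norm q)) sums (norm q / (1 - norm q) ^ 3)"
proof -
  have "(\<lambda>s. real (Suc s) * norm q ^ s) sums (1 / (1 - norm q) ^ 2)"
    using geometric_deriv_sums[of "norm q"] norm_q_less_1 by simp
  from sums_mult[OF this, of "norm q / (1 - norm q)"] show ?thesis
    using norm_q_less_1 by (simp add: field_simps power3_eq_cube power2_eq_square)
qed

lemma summable_Ekn:
  assumes "k \<le> 2"
  shows "summable (\<lambda>s. of_nat (Suc s) ^ (k - 1) * q ^ (Suc s * (n + 1)) / (1 - q ^ Suc s))"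
  by (rule summable_comparison_test'[OF sums_summable[OF sums_Ekn_bound], where N = 0])
     (rule norm_Ekn_term_le[OF assms])

lemma norm_Ekn_le: "k \<le> 2 \<Longrightarrow> norm (Ekn k n q) \<le> norm q / (1 - norm q) ^ 3"
  unfolding Ekn_def sums_unique[OF sums_Ekn_bound]
  by (rule norm_suminf_le[OF norm_Ekn_term_le sums_summable[OF sums_Ekn_bound]])

lemma Ekn_diff:
  assumes "k \<le> 2"
  shows "Ekn k n q - Ekn k (Suc n) q = (\<Sum>s. of_nat (Suc s) ^ (k - 1) * (q ^ Suc n) ^ Suc s)"
proof -
  have cancel: "a * y / (1 - z) - a * (y * z) / (1 - z) = a * y" if "1 - z \<noteq> 0" for a y z :: complex
  proof -
    have "a * y / (1 - z) - a * (y * z) / (1 - z) = a * y * (1 - z) / (1 - z)"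
      by (simp add: diff_divide_distrib[symmetric] algebra_simps)
    then show ?thesis using that by simp
  qed
  have summand: "of_nat (Suc s) ^ (k - 1) * q ^ (Suc s * (n + 1)) / (1 - q ^ Suc s)
      - of_nat (Suc s) ^ (k - 1) * q ^ (Suc s * (Suc n + 1)) / (1 - q ^ Suc s)
      = of_nat (Suc s) ^ (k - 1) * (q ^ Suc n) ^ Suc s" for s
  proof -
    have "q ^ (Suc s * (Suc n + 1)) = q ^ (Suc s * (n + 1)) * q ^ Suc s"
      by (simp add: power_add[symmetric] algebra_simps)
    moreover have "q ^ (Suc s * (n + 1)) = (q ^ Suc n) ^ Suc s"
      unfolding power_mult[symmetric] by (simp add: mult.commute)
    ultimately show ?thesis
      by (simp only:) (rule cancel[OF one_minus_qpow_nonzero], simp)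
  qed
  show ?thesis
    unfolding Ekn_def suminf_diff[OF summable_Ekn[OF assms] summable_Ekn[OF assms]] summand ..
qed

lemma Ekn_1_diff: "Ekn 1 n q - Ekn 1 (Suc n) q = q ^ Suc n / (1 - q ^ Suc n)"
proof -
  define x where "x = q ^ Suc n"
  have "norm x < 1"
    unfolding x_def by (rule norm_qpow_Suc_less_1)
  then have "(\<lambda>s. x ^ Suc s) sums (x / (1 - x))"
    using sums_mult[OF geometric_sums, of x x] by (simp add: field_simps)
  then show ?thesis using Ekn_diff[of 1 n] by (simp add: sums_iff x_def)
qed

lemma Ekn_2_diff: "Ekn 2 n q - Ekn 2 (Suc n) q = q ^ Suc n / (1 - q ^ Suc n) ^ 2"
proof -
  define x where "x = q ^ Suc n"
  have "norm x < 1"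
    unfolding x_def by (rule norm_qpow_Suc_less_1)
  then have "(\<lambda>s. of_nat (Suc s) * x ^ Suc s) sums (x / (1 - x) ^ 2)"
    using sums_mult[OF geometric_deriv_sums, of x x] by (simp add: field_simps)
  then show ?thesis using Ekn_diff[of 2 n] by (simp add: sums_iff x_def)
qed

subsection \<open>Three-term recurrences in \<open>m\<close>\<close>

definition uw :: "nat \<Rightarrow> complex" where
  "uw n = of_nat n - 2 * Ekn 1 n q"

definition yw :: "nat \<Rightarrow> complex" where
  "yw n = uw n ^ 2 / 2 - Ekn 2 n q - E2 q / 24"

text \<open>At \<open>n = 0\<close> division by zero makes \<open>sw 0 = 0\<close> and \<open>tw 0 = 0\<close>, matching the sums over
  \<open>n \<ge> 1\<close> in the closed forms of \<open>L0\<close> and \<open>L1\<close>.\<close>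
definition sw :: "nat \<Rightarrow> complex" where
  "sw n = q ^ n / (1 - q ^ n)"

definition tw :: "nat \<Rightarrow> complex" where
  "tw n = sw n * (uw n + 1 / (1 - q ^ n))"

lemma norm_uw_le: "norm (uw n) \<le> (1 + 2 * (norm q / (1 - norm q) ^ 3)) * (real n + 1)"
proof -
  define B where "B = norm q / (1 - norm q) ^ 3"
  have "B \<ge> 0" using norm_q_less_1 by (simp add: B_def)
  have "norm (uw n) \<le> real n + 2 * B"
    using norm_triangle_ineq4[of "of_nat n" "2 * Ekn 1 n q"] norm_Ekn_le[of 1 n]
    by (simp add: uw_def B_def norm_mult)
  also have "\<dots> \<le> (1 + 2 * B) * (real n + 1)"
    using \<open>B \<ge> 0\<close> by (simp add: algebra_simps)
  finally show ?thesis by (simp add: B_def)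
qed

lemma quadratic_growth_uw [simp]: "quadratic_growth uw"
  by (rule quadratic_growth_linear[OF norm_uw_le])

lemma quadratic_growth_yw [simp]: "quadratic_growth yw"
proof -
  have "quadratic_growth (\<lambda>n. Ekn 2 n q)"
    by (rule quadratic_growth_bounded) (rule norm_Ekn_le, simp)
  moreover have "quadratic_growth (\<lambda>n. uw n ^ 2)"
    by (rule quadratic_growth_power2[OF norm_uw_le])
  moreover have "yw = (\<lambda>n. 1 / 2 * uw n ^ 2 - Ekn 2 n q - E2 q / 24)"
    by (simp add: yw_def[abs_def])
  ultimately show ?thesis
    by (simp only:) (intro quadratic_growth_diff quadratic_growth_cmult quadratic_growth_const)
qed

lemma norm_sw_le: "norm (sw n) \<le> 1 / (1 - norm q)"
  using mult_mono[OF norm_qpow_le_1 norm_inverse_one_minus_qpow_le[of n]]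
  by (simp add: sw_def norm_divide)

lemma quadratic_growth_sw [simp]: "quadratic_growth sw"
  by (rule quadratic_growth_bounded[OF norm_sw_le])

lemma quadratic_growth_tw [simp]: "quadratic_growth tw"
proof -
  have "quadratic_growth (\<lambda>n. uw n * sw n + sw n * (1 / (1 - q ^ n)))"
    using quadratic_growth_mult_bounded[OF quadratic_growth_uw norm_sw_le]
          quadratic_growth_mult_bounded[OF quadratic_growth_sw norm_inverse_one_minus_qpow_le]
    by simp
  then show ?thesis unfolding tw_def[abs_def] by (simp add: algebra_simps)
qed

lemma uw_diff: "uw (Suc n) - uw n = (1 + q ^ Suc n) / (1 - q ^ Suc n)"
proof -
  have "uw (Suc n) - uw n = 1 + 2 * (Ekn 1 n q - Ekn 1 (Suc n) q)"
    by (simp add: uw_def algebra_simps)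
  then show ?thesis
    unfolding Ekn_1_diff using one_minus_qpow_nonzero[of "Suc n"] by (simp add: field_simps)
qed

lemma qpow_double: "q ^ (2 * n) = (q ^ n) ^ 2"
  by (simp add: power_mult[symmetric] mult.commute)

lemma uw_second_difference: "(uw n - uw (n - 1)) * (1 - q ^ n) ^ 2 = 1 - q ^ (2 * n)"
proof (cases n)
  case (Suc k)
  define x where "x = q ^ n"
  have "1 - x \<noteq> 0" using one_minus_qpow_nonzero[of n] Suc by (simp add: x_def)
  have "(uw n - uw (n - 1)) * (1 - x) ^ 2 = (1 + x) / (1 - x) * (1 - x) ^ 2"
    using uw_diff[of k] Suc by (simp add: x_def)
  also have "\<dots> = 1 - x ^ 2"
    using \<open>1 - x \<noteq> 0\<close> by (simp add: power2_eq_square field_simps)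
  finally show ?thesis by (simp add: x_def qpow_double)
qed simp

lemma yw_second_difference:
  "(yw n - yw (n - 1)) * (1 - q ^ n) ^ 2
     = uw n - uw n * q ^ (2 * n) - (1 + q ^ (2 * n)) / 2 + (if n = 0 then 1 else 0)"
proof (cases n)
  case (Suc k)
  define x where "x = q ^ n"
  define T where "T = (1 + x) / (1 - x)"
  define S where "S = x / (1 - x) ^ 2"
  have "1 - x \<noteq> 0" using one_minus_qpow_nonzero[of n] Suc by (simp add: x_def)
  then have T: "T * (1 - x) = 1 + x" and S: "S * (1 - x) ^ 2 = x"
    by (simp_all add: T_def S_def)
  have uw_k: "uw k = uw (Suc k) - T"
    unfolding T_def x_def Suc by (subst uw_diff[of k, symmetric]) simp
  have Ekn_k: "Ekn 2 k q = Ekn 2 (Suc k) q + S"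
    unfolding S_def x_def Suc by (subst Ekn_2_diff[of k, symmetric]) simp
  have "(yw n - yw (n - 1)) * (1 - x) ^ 2
      = uw n * (T * (1 - x)) * (1 - x) - (T * (1 - x)) ^ 2 / 2 + S * (1 - x) ^ 2"
    unfolding Suc diff_Suc_1 yw_def uw_k Ekn_k by (simp add: power2_eq_square field_simps)
  also have "\<dots> = uw n - uw n * x ^ 2 - (1 + x ^ 2) / 2"
    unfolding T S by (simp add: power2_eq_square algebra_simps)
  finally show ?thesis using Suc by (simp only: x_def qpow_double) simp
qed simp

lemma sw_mult_qpow: "sw n * q ^ n = sw n - q ^ n + (if n = 0 then 1 else 0)"
  using one_minus_qpow_nonzero[of n] by (auto simp: sw_def field_simps)

lemma tw_mult_qpow: "tw n * q ^ n = tw n - uw n * q ^ n - sw n + (if n = 0 then uw 0 else 0)"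
proof (cases "n = 0")
  case False
  then have "sw n * (1 - q ^ n) = q ^ n"
    using one_minus_qpow_nonzero[of n] by (simp add: sw_def)
  moreover have "tw n * q ^ n - tw n = - (sw n * (1 - q ^ n)) * (uw n + 1 / (1 - q ^ n))"
    by (simp add: tw_def algebra_simps)
  ultimately have "tw n * q ^ n - tw n = - (uw n * q ^ n) - sw n"
    by (simp add: sw_def algebra_simps)
  then show ?thesis using False by (simp add: algebra_simps)
qed (simp add: tw_def sw_def)

lemma G0_eq_Gsum: "G0 m q = Gsum (\<lambda>_. 1) m"
  by (simp add: G0_def Gsum_def)

lemma G1_eq_Gsum: "G1 m q = (of_int m + 1 / 2) * G0 m q + Gsum uw m"
proof -
  have "(\<lambda>n. A1 m q n) = (\<lambda>n. (of_int m + 1 / 2) * 1 + uw n)"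
    by (simp add: A1_def uw_def algebra_simps)
  then have "G1 m q = Gsum (\<lambda>n. (of_int m + 1 / 2) * 1 + uw n) m"
    by (simp add: G1_def Gsum_def)
  then show ?thesis
    by (simp only: Gsum_add Gsum_cmult G0_eq_Gsum quadratic_growth_cmult quadratic_growth_const
        quadratic_growth_uw)
qed

lemma G2_eq_Gsum:
  "G2 m q = (of_int m + 1 / 2) ^ 2 / 2 * G0 m q + (of_int m + 1 / 2) * Gsum uw m + Gsum yw m"
proof -
  have weight: "(\<lambda>n. 1 / 2 * A1 m q n ^ 2 - Ekn 2 n q - 1 / 24 * E2 q)
      = (\<lambda>n. (of_int m + 1 / 2) ^ 2 / 2 * 1 + (of_int m + 1 / 2) * uw n + yw n)"
    by (intro ext) (simp add: A1_def uw_def yw_def power2_eq_square field_simps)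
  have "G2 m q = Gsum (\<lambda>n. (of_int m + 1 / 2) ^ 2 / 2 * 1 + (of_int m + 1 / 2) * uw n + yw n) m"
    unfolding G2_def Gsum_def[symmetric] weight ..
  then show ?thesis
    by (simp only: Gsum_add Gsum_cmult G0_eq_Gsum quadratic_growth_add quadratic_growth_cmult
        quadratic_growth_const quadratic_growth_uw quadratic_growth_yw)
qed

lemma G0_recurrence: "G0 (m + 2) q = (2 - q powi (m + 1)) * G0 (m + 1) q - G0 m q"
  unfolding G0_eq_Gsum Gsum_recurrence[OF quadratic_growth_const] by (simp add: Gsum_def)

lemma Gsum_uw_recurrence:
  "Gsum uw (m + 2) = (2 - q powi (m + 1)) * Gsum uw (m + 1) - Gsum uw m + G0 m q - G0 (m + 2) q"
proof -
  have "Gsum (\<lambda>n. (uw n - uw (n - 1)) * (1 - q ^ n) ^ 2) m = G0 m q - G0 (m + 2) q"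
    unfolding uw_second_difference G0_eq_Gsum Gsum_shift_2
    by (simp add: Gsum_diff)
  then show ?thesis unfolding Gsum_recurrence[OF quadratic_growth_uw] by simp
qed

lemma Gsum_yw_recurrence:
  "Gsum yw (m + 2) = (2 - q powi (m + 1)) * Gsum yw (m + 1) - Gsum yw m
     + Gsum uw m - Gsum uw (m + 2) - (G0 m q + G0 (m + 2) q) / 2 + 1"
proof -
  have "Gsum (\<lambda>n. (yw n - yw (n - 1)) * (1 - q ^ n) ^ 2) m
      = Gsum uw m - Gsum uw (m + 2) - (G0 m q + G0 (m + 2) q) / 2 + 1"
    unfolding yw_second_difference Gsum_shift_2 G0_eq_Gsum
    by (simp add: Gsum_add Gsum_diff Gsum_divide Gsum_delta_0)
  then show ?thesis unfolding Gsum_recurrence[OF quadratic_growth_yw] by simp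
qed

lemma G1_recurrence: "G1 (m + 2) q = (2 - q powi (m + 1)) * G1 (m + 1) q - G1 m q"
  unfolding G1_eq_Gsum Gsum_uw_recurrence G0_recurrence of_int_add of_int_1 of_int_numeral by algebra

lemma G2_recurrence: "G2 (m + 2) q = (2 - q powi (m + 1)) * G2 (m + 1) q - G2 m q + 1"
  unfolding G2_eq_Gsum Gsum_yw_recurrence Gsum_uw_recurrence G0_recurrence of_int_add of_int_1
    of_int_numeral by (simp add: field_simps power2_eq_square)

lemma G0_tendsto: "(\<lambda>k. G0 (int k) q) \<longlonglongrightarrow> 1" "(\<lambda>k. G0 (int k + 1) q) \<longlonglongrightarrow> 1"
  unfolding G0_eq_Gsum using Gsum_tendsto Gsum_tendsto_Suc quadratic_growth_const by fastforce+

lemma Gsum_sw_shift: "Gsum sw (m + 1) = Gsum sw m - G0 (m + 1) q + 1"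
  unfolding Gsum_shift_1 sw_mult_qpow G0_eq_Gsum
  by (simp add: Gsum_add Gsum_diff Gsum_delta_0)

lemma Gsum_tw_shift: "Gsum tw (m + 1) = Gsum tw m - Gsum uw (m + 1) - Gsum sw m + uw 0"
  unfolding Gsum_shift_1[of tw] tw_mult_qpow Gsum_shift_1[of uw]
  by (simp add: Gsum_add Gsum_diff Gsum_delta_0)

subsection \<open>Casoratians of \<open>G0\<close>, \<open>G1\<close>, \<open>G2\<close>\<close>

lemma casoratian_G0_G1: "casoratian (\<lambda>m. G0 m q) (\<lambda>m. G1 m q) m = -1"
proof (rule shift_invariant_eq_limit)
  show "casoratian (\<lambda>m. G0 m q) (\<lambda>m. G1 m q) (m + 1) = casoratian (\<lambda>m. G0 m q) (\<lambda>m. G1 m q) m" for m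
    using casoratian_step[of "\<lambda>m. G0 m q" m "2 - q powi (m + 1)" "\<lambda>m. G1 m q" 0]
      G0_recurrence[of m] G1_recurrence[of m] by simp
  have "casoratian (\<lambda>m. G0 m q) (\<lambda>m. G1 m q) m
      = G0 (m + 1) q * Gsum uw m - G0 m q * Gsum uw (m + 1) - G0 m q * G0 (m + 1) q" for m
    unfolding casoratian_def G1_eq_Gsum of_int_add of_int_1 by algebra
  moreover have "(\<lambda>k. G0 (int k + 1) q * Gsum uw (int k) - G0 (int k) q * Gsum uw (int k + 1)
      - G0 (int k) q * G0 (int k + 1) q) \<longlonglongrightarrow> 1 * uw 0 - 1 * uw 0 - 1 * 1"
    by (intro tendsto_intros G0_tendsto Gsum_tendsto Gsum_tendsto_Suc quadratic_growth_uw)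
  ultimately show "(\<lambda>k. casoratian (\<lambda>m. G0 m q) (\<lambda>m. G1 m q) (int k)) \<longlonglongrightarrow> -1"
    by simp
qed

lemma L0_eq_casoratian: "L0 m q = casoratian (\<lambda>m. G0 m q) (\<lambda>m. G2 m q) m"
  by (simp add: L0_def casoratian_def)

lemma L1_eq_casoratian: "L1 m q = casoratian (\<lambda>m. G1 m q) (\<lambda>m. G2 m q) m"
  by (simp add: L1_def casoratian_def)

lemma L0_step: "L0 (m + 1) q = L0 m q - G0 (m + 1) q"
  using casoratian_step[of "\<lambda>m. G0 m q" m "2 - q powi (m + 1)" "\<lambda>m. G2 m q" 1]
    G0_recurrence[of m] G2_recurrence[of m]
  by (simp add: L0_eq_casoratian)

lemma L1_step: "L1 (m + 1) q = L1 m q - G1 (m + 1) q"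
  using casoratian_step[of "\<lambda>m. G1 m q" m "2 - q powi (m + 1)" "\<lambda>m. G2 m q" 1]
    G1_recurrence[of m] G2_recurrence[of m]
  by (simp add: L1_eq_casoratian)

definition L0_closed :: "int \<Rightarrow> complex" where
  "L0_closed m = 2 * Ekn 1 0 q - 1 - of_int m + Gsum sw m"

definition L1_closed :: "int \<Rightarrow> complex" where
  "L1_closed m = - 3 / 8 - 2 * Ekn 1 0 q ^ 2 + 2 * Ekn 1 0 q - Ekn 2 0 q - 1 / 24 * E2 q
     + 2 * of_int m * Ekn 1 0 q - of_int m - of_int m ^ 2 / 2 + (of_int m + 1 / 2) * Gsum sw m + Gsum tw m"

lemma L0_closed_step: "L0_closed (m + 1) = L0_closed m - G0 (m + 1) q"
  unfolding L0_closed_def Gsum_sw_shift by simp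

lemma L1_closed_step: "L1_closed (m + 1) = L1_closed m - G1 (m + 1) q"
  unfolding L1_closed_def Gsum_sw_shift Gsum_tw_shift G1_eq_Gsum[of "m + 1"]
  by (simp add: uw_def field_simps power2_eq_square)

text \<open>Both \<open>L0 m q\<close> and \<open>L0_closed m\<close> grow with \<open>m\<close>, but by \<open>casoratian_G0_G1\<close> (and,
  for \<open>L1\<close>, \<open>L0_eq_closed\<close>) their difference is a combination of sums with \<open>m\<close>-independent
  weights, whose limits as \<open>m \<rightarrow> \<infinity>\<close> are known.\<close>
lemma L0_minus_closed:
  "L0 m q - L0_closed m = G0 (m + 1) q * Gsum yw m - G0 m q * Gsum yw (m + 1)
     - G0 m q * G0 (m + 1) q / 2 - G0 m q * Gsum uw (m + 1) + 1 / 2 - 2 * Ekn 1 0 q - Gsum sw m"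
proof -
  have "L0 m q - L0_closed m = G0 (m + 1) q * Gsum yw m - G0 m q * Gsum yw (m + 1)
     - G0 m q * G0 (m + 1) q / 2 - G0 m q * Gsum uw (m + 1) + 1 / 2 - 2 * Ekn 1 0 q - Gsum sw m
     + (of_int m + 1 / 2) * (casoratian (\<lambda>m. G0 m q) (\<lambda>m. G1 m q) m + 1)"
    unfolding L0_closed_def L0_eq_casoratian casoratian_def G1_eq_Gsum G2_eq_Gsum of_int_add of_int_1
    by (simp add: field_simps power2_eq_square)
  then show ?thesis by (simp add: casoratian_G0_G1)
qed

lemma L0_eq_closed: "L0 m q = L0_closed m"
proof -
  have "L0 m q - L0_closed m = 0"
  proof (rule shift_invariant_eq_limit[where D = "\<lambda>m. L0 m q - L0_closed m"])
    show "L0 (m + 1) q - L0_closed (m + 1) = L0 m q - L0_closed m" for m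
      by (simp add: L0_step L0_closed_step)
    have "(\<lambda>k. G0 (int k + 1) q * Gsum yw (int k) - G0 (int k) q * Gsum yw (int k + 1)
        - G0 (int k) q * G0 (int k + 1) q / 2 - G0 (int k) q * Gsum uw (int k + 1) + 1 / 2
        - 2 * Ekn 1 0 q - Gsum sw (int k))
      \<longlonglongrightarrow> 1 * yw 0 - 1 * yw 0 - 1 * 1 / 2 - 1 * uw 0 + 1 / 2 - 2 * Ekn 1 0 q - sw 0"
      by (intro tendsto_intros G0_tendsto Gsum_tendsto Gsum_tendsto_Suc
          quadratic_growth_uw quadratic_growth_yw quadratic_growth_sw) simp_all
    moreover have "1 * yw 0 - 1 * yw 0 - 1 * 1 / 2 - 1 * uw 0 + 1 / 2 - 2 * Ekn 1 0 q - sw 0 = 0"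
      by (simp add: uw_def sw_def)
    ultimately show "(\<lambda>k. L0 (int k) q - L0_closed (int k)) \<longlonglongrightarrow> 0"
      unfolding L0_minus_closed by simp
  qed
  then show ?thesis by simp
qed

lemma L1_minus_closed:
  "L1 m q - L1_closed m = G0 (m + 1) q * Gsum yw m - Gsum uw m * G0 (m + 1) q / 2
     - Gsum uw m * Gsum uw (m + 1) + Gsum uw (m + 1) * Gsum yw m - Gsum uw m * Gsum yw (m + 1)
     + 2 * Ekn 1 0 q ^ 2 - Ekn 1 0 q + Ekn 2 0 q + E2 q / 24 - Gsum tw m"
proof -
  have "L1 m q - L1_closed m = G0 (m + 1) q * Gsum yw m - Gsum uw m * G0 (m + 1) q / 2
     - Gsum uw m * Gsum uw (m + 1) + Gsum uw (m + 1) * Gsum yw m - Gsum uw m * Gsum yw (m + 1)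
     + 2 * Ekn 1 0 q ^ 2 - Ekn 1 0 q + Ekn 2 0 q + E2 q / 24 - Gsum tw m
     - (of_int m + 1 / 2) ^ 2 / 2 * (casoratian (\<lambda>m. G0 m q) (\<lambda>m. G1 m q) m + 1)
     + (of_int m + 1 / 2) * (L0 m q - L0_closed m)"
    unfolding L0_closed_def L1_closed_def L0_eq_casoratian L1_eq_casoratian casoratian_def
      G1_eq_Gsum G2_eq_Gsum of_int_add of_int_1
    by (simp add: field_simps power2_eq_square)
  then show ?thesis by (simp add: casoratian_G0_G1 L0_eq_closed)
qed

lemma L1_eq_closed: "L1 m q = L1_closed m"
proof -
  have "L1 m q - L1_closed m = 0"
  proof (rule shift_invariant_eq_limit[where D = "\<lambda>m. L1 m q - L1_closed m"])
    show "L1 (m + 1) q - L1_closed (m + 1) = L1 m q - L1_closed m" for m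
      by (simp add: L1_step L1_closed_step)
    have "(\<lambda>k. G0 (int k + 1) q * Gsum yw (int k) - Gsum uw (int k) * G0 (int k + 1) q / 2
        - Gsum uw (int k) * Gsum uw (int k + 1) + Gsum uw (int k + 1) * Gsum yw (int k)
        - Gsum uw (int k) * Gsum yw (int k + 1)
        + 2 * Ekn 1 0 q ^ 2 - Ekn 1 0 q + Ekn 2 0 q + E2 q / 24 - Gsum tw (int k))
      \<longlonglongrightarrow> 1 * yw 0 - uw 0 * 1 / 2 - uw 0 * uw 0 + uw 0 * yw 0 - uw 0 * yw 0
        + 2 * Ekn 1 0 q ^ 2 - Ekn 1 0 q + Ekn 2 0 q + E2 q / 24 - tw 0"
      by (intro tendsto_intros G0_tendsto Gsum_tendsto Gsum_tendsto_Suc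
          quadratic_growth_uw quadratic_growth_yw quadratic_growth_tw) simp_all
    moreover have "1 * yw 0 - uw 0 * 1 / 2 - uw 0 * uw 0 + uw 0 * yw 0 - uw 0 * yw 0
        + 2 * Ekn 1 0 q ^ 2 - Ekn 1 0 q + Ekn 2 0 q + E2 q / 24 - tw 0 = 0"
      by (simp add: yw_def uw_def tw_def sw_def field_simps power2_eq_square)
    ultimately show "(\<lambda>k. L1 (int k) q - L1_closed (int k)) \<longlonglongrightarrow> 0"
      unfolding L1_minus_closed by simp
  qed
  then show ?thesis by simp
qed

lemma Gsum_eq_suminf_Suc:
  assumes "quadratic_growth w" "w 0 = 0"
  shows "Gsum w m = (\<Sum>n. w (Suc n) * Gterm m q (Suc n))"
  using suminf_split_head[OF sums_summable[OF sums_Gsum[OF assms(1)]]] assms(2)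
  by (simp add: Gsum_def)

lemma L0_series_summand:
  "(-1) ^ Suc n * q ^ (Suc n * (Suc n + 1) div 2) / (qpoch q q (Suc n)) ^ 2
     * q powi (m * int (Suc n) + int (Suc n)) / (1 - q ^ Suc n) = sw (Suc n) * Gterm m q (Suc n)"
proof -
  have "q powi (m * int (Suc n) + int (Suc n)) = q powi (m * int (Suc n)) * q ^ Suc n"
    by (simp add: power_int_add q_nonzero)
  then show ?thesis by (simp add: Gterm_def sw_def mult_ac)
qed

lemma L0_series_eq_Gsum:
  "(\<Sum>n. (-1) ^ Suc n * q ^ (Suc n * (Suc n + 1) div 2) / (qpoch q q (Suc n)) ^ 2
         * q powi (m * int (Suc n) + int (Suc n)) / (1 - q ^ Suc n)) = Gsum sw m"
  unfolding L0_series_summand by (rule Gsum_eq_suminf_Suc[symmetric]) (simp, simp add: sw_def)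

lemma L1_series_eq_Gsum:
  "(\<Sum>n. (-1) ^ Suc n * q ^ (Suc n * (Suc n + 1) div 2) / (qpoch q q (Suc n)) ^ 2
         * q powi (m * int (Suc n) + int (Suc n)) / (1 - q ^ Suc n)
         * (of_nat (Suc n) + of_int m + 1 / 2 - 2 * Ekn 1 (Suc n) q + 1 / (1 - q ^ Suc n)))
     = (of_int m + 1 / 2) * Gsum sw m + Gsum tw m"
proof -
  have "(of_int m + 1 / 2) * Gsum sw m + Gsum tw m = Gsum (\<lambda>n. (of_int m + 1 / 2) * sw n + tw n) m"
    by (simp add: Gsum_add Gsum_cmult)
  also have "\<dots> = (\<Sum>n. ((of_int m + 1 / 2) * sw (Suc n) + tw (Suc n)) * Gterm m q (Suc n))"
    by (rule Gsum_eq_suminf_Suc) (simp, simp add: sw_def tw_def)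
  finally show ?thesis
    unfolding L0_series_summand by (simp add: tw_def uw_def algebra_simps)
qed

end

theorem theorem2p2:
  fixes q :: complex and m :: int
  assumes "norm q < 1" and "q \<noteq> 0"
  shows "invertible (Jmat m q)
     \<and> matrix_inv (Jmat m q) =
         vector [vector [1, L0 m q, - L1 m q],
                 vector [0, - G0 (m + 1) q, G1 (m + 1) q],
                 vector [0, G0 m q, - G1 m q]]
     \<and> L0 m q = 2 * Ekn 1 0 q - 1 - of_int m
         + (\<Sum>n. (-1) ^ Suc n * q ^ (Suc n * (Suc n + 1) div 2) / (qpoch q q (Suc n)) ^ 2
                 * q powi (m * int (Suc n) + int (Suc n)) / (1 - q ^ Suc n))
     \<and> L1 m q = - 3 / 8 - 2 * (Ekn 1 0 q) ^ 2 + 2 * Ekn 1 0 q - Ekn 2 0 q - (1 / 24) * E2 q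
         + 2 * of_int m * Ekn 1 0 q - of_int m - (of_int m) ^ 2 / 2
         + (\<Sum>n. (-1) ^ Suc n * q ^ (Suc n * (Suc n + 1) div 2) / (qpoch q q (Suc n)) ^ 2
                 * q powi (m * int (Suc n) + int (Suc n)) / (1 - q ^ Suc n)
                 * (of_nat (Suc n) + of_int m + 1 / 2 - 2 * Ekn 1 (Suc n) q
                    + 1 / (1 - q ^ Suc n)))"
proof -
  interpret punctured_unit_disc q
    using assms by unfold_locales
  have det: "G1 m q * G0 (m + 1) q - G1 (m + 1) q * G0 m q = -1"
    using casoratian_G0_G1[of m] by (simp add: casoratian_def algebra_simps)
  have "invertible (Jmat m q) \<and> matrix_inv (Jmat m q) =
         vector [vector [1, L0 m q, - L1 m q],
                 vector [0, - G0 (m + 1) q, G1 (m + 1) q],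
                 vector [0, G0 m q, - G1 m q]]"
    using matrix_inv_block_upper_3[OF det, of "G2 m q" "G2 (m + 1) q"]
    by (simp add: Jmat_def L0_def L1_def algebra_simps)
  then show ?thesis
    unfolding L0_series_eq_Gsum L1_series_eq_Gsum L0_eq_closed L1_eq_closed L0_closed_def L1_closed_def
    by simp
qed

end
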